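(* Let $d\geq 0$ and $i>0$ be integers, and let $h(t)$ be a polynomial with rational coefficients of degree at most $d+1$ that is symmetric about $\frac{d+1}{2}$, i.e. $h(t)=t^{d+1}h(1/t)$. If $g^{(d,i)}(h(t))\geq 0$ componentwise, then $g^{(d,i+1)}(h(t))\geq 0$ componentwise.
   Context: For integers $d\geq 0$ and $i>0$, let $q\geq 0$, $1\leq r\leq i$ be the unique integers with $d+1=qi+r$ and define $P_{d,i}(t)=(1+t+\cdots+t^i)^q(1+t+\cdots+t^r)$; also set $P_{-1,i}(t)=1$. Let $B_{d,i}$ be the ordered list $\big(P_{d,i}(t),\ tP_{d-2,i}(t),\ t^2P_{d-4,i}(t),\ldots,\ t^{\lfloor (d+1)/2\rfloor}P_{d-2\lfloor (d+1)/2\rfloor,i}(t)\big)$, which is a basis of the $\mathbb{Q}$-vector space of polynomials of degree at most $d+1$ satisfying $h(t)=t^{d+1}h(1/t)$. For such $h$, $g^{(d,i)}(h(t))=(g_0,\ldots,g_{\lfloor (d+1)/2\rfloor})$ is the vector of coefficients of $h$ in the basis $B_{d,i}$, i.e. $h(t)=\sum_j g_j t^jP_{d-2j,i}(t)$. *)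

theory Defs
  imports "HOL-Computational_Algebra.Polynomial"
begin

definition geom_poly :: "nat \<Rightarrow> rat poly" where
  "geom_poly i = (\<Sum>k\<le>i. monom 1 k)"

text \<open>P_{d,i}(t) for integer d >= -1 and i > 0: with d+1 = q*i + r, 1 <= r <= i,
  we have q = d div i and r = d mod i + 1.  P_{-1,i} = 1 (also used for any d < 0).\<close>
definition Pdi :: "int \<Rightarrow> nat \<Rightarrow> rat poly" where
  "Pdi d i = (if d < 0 then 1
              else geom_poly i ^ nat (d div int i) * geom_poly (nat (d mod int i) + 1))"

text \<open>The vector g^{(d,i)}(h) of coefficients of h in the basis B_{d,i}, as a function
  of the index j (components j > floor((d+1)/2) are zero).\<close>
definition gvec :: "nat \<Rightarrow> nat \<Rightarrow> rat poly \<Rightarrow> nat \<Rightarrow> rat" where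
  "gvec d i h = (THE g. (\<forall>j > (d + 1) div 2. g j = 0) \<and>
      h = (\<Sum>j\<le>(d + 1) div 2. smult (g j) (monom 1 j * Pdi (int d - 2 * int j) i)))"

end

theory Submission
  imports Defs
begin

(* Notation: [n] = 1 + t + ... + t^n (geom_poly n).  A polynomial of degree <= n is
   palindromic of degree n if h(t) = t^n h(1/t); these polynomials have the basis
   B_{n-1,m} = (t^j P_{n-1-2j,m})_j, and C(m,n) denotes the cone of nonnegative combinations
   of this basis.  If n = k m + x with 0 <= x <= m then P_{n-1,m} = [m]^k [x].

   Proof idea: by hypothesis h is a nonnegative combination of the elements t^j P_{d-2j,i}
   of B_{d,i}, so it suffices to put every P_{e,i} = [i]^q [r] (r <= i) into the cone
   C(i+1, e+1); then h lies in C(i+1, d+1), and uniqueness of coordinates gives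
   g^{(d,i+1)}(h) >= 0.  Call F stable for m if every product F [m]^k [x] with x <= m lies in
   the cone for m.  The constant 1 is stable, and by the exchange identity
       [a+1][a+1+c] = [a][a+2+c] + t^(a+1) [c]
   stability is preserved by multiplication with any [b], b <= m; hence [i]^q is stable for
   m = i + 1. *)

abbreviation X :: "rat poly" where "X \<equiv> [:0, 1:]"

section \<open>Geometric polynomials\<close>

lemma geom_poly_0: "geom_poly 0 = 1"
  unfolding geom_poly_def by (simp add: monom_0 one_pCons)

lemma monom_X: "monom 1 n = X ^ n"
  by (simp add: monom_altdef)

lemma geom_poly_Suc: "geom_poly (Suc n) = geom_poly n + X ^ Suc n"
  unfolding geom_poly_def by (simp add: monom_X)

lemma geom_poly_telescope: "(1 - X) * geom_poly n = 1 - X ^ Suc n"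
proof (induction n)
  case 0
  then show ?case by (simp add: geom_poly_0)
next
  case (Suc n)
  have "(1 - X) * geom_poly (Suc n) = (1 - X) * geom_poly n + (1 - X) * X ^ Suc n"
    by (simp only: geom_poly_Suc distrib_left)
  also have "\<dots> = 1 - X ^ Suc n + (1 - X) * X ^ Suc n"
    using Suc.IH by simp
  also have "\<dots> = 1 - X ^ Suc (Suc n)"
    by (simp only: power_Suc algebra_simps)
  finally show ?case .
qed

text \<open>The exchange identity [a+1][a+1+c] = [a][a+2+c] + t^(a+1)[c]: it moves one unit of
  degree from the smaller factor to the larger one at the price of a term with nonnegative
  coefficient.  It follows from the closed form after multiplying by (1 - t)^2.\<close>
lemma geom_poly_exchange:
  "geom_poly (Suc a) * geom_poly (Suc a + c) =
     geom_poly a * geom_poly (Suc (Suc a) + c) + X ^ Suc a * geom_poly c"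
proof -
  define D where "D = 1 - X"
  have D: "D * D \<noteq> 0" unfolding D_def by (simp add: one_pCons)
  have closed: "D * geom_poly n = 1 - X ^ Suc n" for n
    unfolding D_def by (rule geom_poly_telescope)
  have "(D * D) * (geom_poly (Suc a) * geom_poly (Suc a + c))
      = (1 - X ^ Suc (Suc a)) * (1 - X ^ Suc (Suc a + c))"
    by (simp only: closed[symmetric] mult_ac)
  also have "\<dots> = (1 - X ^ Suc a) * (1 - X ^ Suc (Suc (Suc a) + c))
                  + X ^ Suc a * ((1 - X) * (1 - X ^ Suc c))"
    by (simp add: power_add algebra_simps)
  also have "\<dots> = (D * D) * (geom_poly a * geom_poly (Suc (Suc a) + c) + X ^ Suc a * geom_poly c)"
    by (simp only: closed[symmetric] D_def[symmetric] algebra_simps)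
  finally show ?thesis using D by simp
qed

section \<open>The polynomials P as products of geometric polynomials\<close>

lemma Pdi_nat: "Pdi (int n) m = geom_poly m ^ (n div m) * geom_poly (Suc (n mod m))"
proof -
  have "nat (int n div int m) = n div m" "nat (int n mod int m) = n mod m"
    by (simp_all only: zdiv_int[symmetric] zmod_int[symmetric] nat_int)
  then show ?thesis unfolding Pdi_def by simp
qed

lemma Pdi_nat_split:
  assumes "y < m"
  shows "Pdi (int (k * m + y)) m = geom_poly m ^ k * geom_poly (Suc y)"
  using Pdi_nat[of "k * m + y" m] assms by simp

lemma Pdi_geom:
  assumes "m > 0" "x \<le> m"
  shows "Pdi (int (k * m + x) - 1) m = geom_poly m ^ k * geom_poly x"
proof -
  consider "x = 0" "k = 0" | k' where "x = 0" "k = Suc k'" | y where "x = Suc y"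
    by (cases x; cases k) auto
  then show ?thesis
  proof cases
    case 1
    then show ?thesis by (simp add: Pdi_def geom_poly_0)
  next
    case (2 k')
    define y where "y = m - 1"
    have y: "y < m" "Suc y = m" and n: "int (k * m + x) - 1 = int (k' * m + y)"
      using 2 assms by (simp_all add: y_def of_nat_diff)
    show ?thesis
      unfolding n Pdi_nat_split[OF y(1)] using y(2) 2 by (simp add: geom_poly_0 mult.commute)
  next
    case (3 y)
    then show ?thesis using Pdi_nat_split[of y m k] assms by simp
  qed
qed

lemma Pdi_geom_decomp:
  assumes "i > 0"
  shows "Pdi (int n - 1) i = geom_poly i ^ (n div i) * geom_poly (n mod i)"
  using Pdi_geom[OF assms, of "n mod i" "n div i"] mod_less_divisor[OF assms, of n] by simp

section \<open>Palindromic polynomials\<close>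

definition palindromic :: "nat \<Rightarrow> rat poly \<Rightarrow> bool" where
  "palindromic n p \<longleftrightarrow> degree p \<le> n \<and> (\<forall>x. x \<noteq> 0 \<longrightarrow> poly p x = x ^ n * poly p (1 / x))"

lemma palindromic_mult:
  assumes "palindromic a p" "palindromic b q"
  shows "palindromic (a + b) (p * q)"
  unfolding palindromic_def
proof (intro conjI allI impI)
  show "degree (p * q) \<le> a + b"
    using assms degree_mult_le[of p q] unfolding palindromic_def by linarith
  fix x :: rat
  assume "x \<noteq> 0"
  then have "poly p x = x ^ a * poly p (1 / x)" "poly q x = x ^ b * poly q (1 / x)"
    using assms unfolding palindromic_def by blast+
  then show "poly (p * q) x = x ^ (a + b) * poly (p * q) (1 / x)"
    by (simp only: poly_mult power_add mult_ac)
qed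

lemma palindromic_power: "palindromic a p \<Longrightarrow> palindromic (a * k) (p ^ k)"
proof (induction k)
  case 0
  then show ?case by (simp add: palindromic_def)
next
  case (Suc k)
  then show ?case using palindromic_mult[of a p "a * k" "p ^ k"] by simp
qed

lemma palindromic_geom: "palindromic n (geom_poly n)"
  unfolding palindromic_def
proof (intro conjI allI impI)
  show "degree (geom_poly n) \<le> n"
    unfolding geom_poly_def by (rule degree_sum_le) (simp_all add: degree_monom_eq)
  have poly_geom: "poly (geom_poly n) y = (\<Sum>k\<le>n. y ^ k)" for y
    unfolding geom_poly_def by (simp add: poly_sum poly_monom)
  fix x :: rat
  assume x: "x \<noteq> 0"
  have "x ^ n * poly (geom_poly n) (1 / x) = (\<Sum>k\<le>n. x ^ n * (1 / x) ^ k)"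
    by (simp add: poly_geom sum_distrib_left)
  also have "\<dots> = (\<Sum>k\<le>n. x ^ (n - k))"
    by (rule sum.cong) (use x in \<open>auto simp: power_diff power_one_over\<close>)
  also have "\<dots> = (\<Sum>k\<le>n. x ^ k)"
    by (rule sum.reindex_bij_witness[where i="\<lambda>k. n - k" and j="\<lambda>k. n - k"]) auto
  finally show "poly (geom_poly n) x = x ^ n * poly (geom_poly n) (1 / x)"
    by (simp add: poly_geom)
qed

lemma palindromic_Pdi:
  assumes "i > 0"
  shows "palindromic n (Pdi (int n - 1) i)"
proof -
  have "palindromic (i * (n div i) + n mod i) (geom_poly i ^ (n div i) * geom_poly (n mod i))"
    by (intro palindromic_mult palindromic_power palindromic_geom)
  then show ?thesis by (simp add: Pdi_geom_decomp[OF assms])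
qed

lemma palindromic_diff:
  assumes "palindromic n p" "palindromic n q"
  shows "palindromic n (p - smult c q)"
  unfolding palindromic_def
proof (intro conjI allI impI)
  show "degree (p - smult c q) \<le> n"
    using assms degree_diff_le[of p n "smult c q"] degree_smult_le[of c q]
    unfolding palindromic_def by linarith
  fix x :: rat
  assume "x \<noteq> 0"
  then have "poly p x = x ^ n * poly p (1 / x)" "poly q x = x ^ n * poly q (1 / x)"
    using assms unfolding palindromic_def by blast+
  then show "poly (p - smult c q) x = x ^ n * poly (p - smult c q) (1 / x)"
    by (simp only: poly_diff poly_smult algebra_simps)
qed

lemma poly_eq_on_nonzero:
  fixes p q :: "'a::{idom, ring_char_0} poly"
  assumes "\<And>x. x \<noteq> 0 \<Longrightarrow> poly p x = poly q x"
  shows "p = q"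
proof (rule ccontr)
  assume "p \<noteq> q"
  then have "finite {x. poly (p - q) x = 0}" by (intro poly_roots_finite) simp
  moreover have "UNIV - {0} \<subseteq> {x. poly (p - q) x = 0}" using assms by auto
  ultimately have "finite (UNIV - {0::'a})" by (rule finite_subset[rotated])
  then show False using infinite_UNIV_char_0[where 'a='a] by simp
qed

lemma palindromic_coeff_top:
  assumes "palindromic n p"
  shows "coeff p n = coeff p 0"
proof (cases "p = 0")
  case False
  define m where "m = degree p"
  have mn: "m \<le> n" using assms unfolding palindromic_def m_def by simp
  have reflect: "p = monom 1 (n - m) * reflect_poly p"
  proof (rule poly_eq_on_nonzero)
    fix x :: rat
    assume x: "x \<noteq> 0"
    have "poly (monom 1 (n - m) * reflect_poly p) x = x ^ (n - m) * (x ^ m * poly p (inverse x))"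
      using x by (simp add: poly_monom poly_reflect_poly_nz m_def)
    also have "\<dots> = x ^ n * poly p (1 / x)"
      using mn by (simp add: mult.assoc[symmetric] power_add[symmetric] inverse_eq_divide)
    also have "\<dots> = poly p x" using assms x unfolding palindromic_def by (metis (no_types))
    finally show "poly p x = poly (monom 1 (n - m) * reflect_poly p) x" by simp
  qed
  have "coeff p 0 = coeff (monom 1 (n - m) * reflect_poly p) 0"
    using arg_cong[OF reflect, of "\<lambda>q. coeff q 0"] .
  also have "\<dots> = (if 0 < n - m then 0 else lead_coeff p)"
    by (simp add: coeff_monom_mult)
  finally show ?thesis
    using mn by (cases "m = n") (auto simp: m_def coeff_eq_0)
qed simp

lemma palindromic_pCons0:
  assumes pal: "palindromic n (pCons 0 r)"
  shows "palindromic (n - 2) r" and "n < 2 \<Longrightarrow> r = 0"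
proof -
  have deg: "degree r + 2 \<le> n" if "r \<noteq> 0"
  proof -
    have "degree (pCons 0 r) \<le> n" using pal unfolding palindromic_def by simp
    moreover have "coeff (pCons 0 r) n = 0" using palindromic_coeff_top[OF pal] by simp
    moreover have "lead_coeff (pCons 0 r) \<noteq> 0" using that by simp
    ultimately have "degree (pCons 0 r) < n" by (metis le_neq_implies_less)
    then show ?thesis using that by simp
  qed
  then show "n < 2 \<Longrightarrow> r = 0" by fastforce
  show "palindromic (n - 2) r"
  proof (cases "r = 0")
    case False
    then have n2: "n = Suc (Suc (n - 2))" using deg by simp
    show ?thesis
      unfolding palindromic_def
    proof (intro conjI allI impI)
      show "degree r \<le> n - 2" using deg False by simp
      fix x :: rat
      assume x: "x \<noteq> 0"
      have "poly (pCons 0 r) x = x ^ n * poly (pCons 0 r) (1 / x)"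
        using pal x unfolding palindromic_def by blast
      then have "x * poly r x = x ^ n * ((1 / x) * poly r (1 / x))" by simp
      also have "\<dots> = x * (x ^ (n - 2) * poly r (1 / x))"
        using x by (subst n2) (simp add: field_simps)
      finally show "poly r x = x ^ (n - 2) * poly r (1 / x)" using x by simp
    qed
  qed (simp add: palindromic_def)
qed

section \<open>Coordinates in the basis B\<close>

definition basis_sum :: "nat \<Rightarrow> nat \<Rightarrow> (nat \<Rightarrow> rat) \<Rightarrow> rat poly" where
  "basis_sum n i c = (\<Sum>j\<le>n div 2. smult (c j) (monom 1 j * Pdi (int n - 1 - 2 * int j) i))"

lemma basis_sum_expand:
  "basis_sum (d + 1) i c = (\<Sum>j\<le>(d + 1) div 2. smult (c j) (monom 1 j * Pdi (int d - 2 * int j) i))"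
  by (simp add: basis_sum_def)

lemma coeff0_Pdi: "coeff (Pdi d i) 0 = 1"
proof -
  have "coeff (geom_poly n) 0 = 1" for n
    unfolding geom_poly_def coeff_sum coeff_monom by (simp add: sum.delta)
  then show ?thesis unfolding Pdi_def by (simp add: coeff_mult_0 coeff_0_power)
qed

text \<open>Linear independence: since t^j P_{n-1-2j,i} starts with t^j, the coordinates of the
  zero polynomial vanish (by induction along the coefficients).\<close>
lemma basis_sum_eq_0:
  assumes "basis_sum n i c = 0" "j \<le> n div 2"
  shows "c j = 0"
  using assms(2)
proof (induction j rule: less_induct)
  case (less j)
  have "0 = coeff (basis_sum n i c) j" using assms(1) by simp
  also have "\<dots> = (\<Sum>k\<le>n div 2. c k * (if j < k then 0 else coeff (Pdi (int n - 1 - 2 * int k) i) (j - k)))"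
    unfolding basis_sum_def coeff_sum coeff_smult coeff_monom_mult
    by (rule sum.cong, rule refl, simp only: mult_1_left)
  also have "\<dots> = (\<Sum>k\<le>n div 2. if k = j then c j else 0)"
    by (rule sum.cong) (use less in \<open>auto simp: coeff0_Pdi\<close>)
  also have "\<dots> = c j" using less.prems by simp
  finally show ?case by simp
qed

lemma basis_sum_unique:
  assumes "basis_sum n i c = basis_sum n i c'" "j \<le> n div 2"
  shows "c j = c' j"
proof -
  have "basis_sum n i (\<lambda>j. c j - c' j) = basis_sum n i c - basis_sum n i c'"
    by (simp add: basis_sum_def sum_subtractf smult_diff_left)
  then show ?thesis using basis_sum_eq_0[of n i "\<lambda>j. c j - c' j" j] assms by simp
qed

lemma gvec_basis_sum:
  assumes h: "h = basis_sum (d + 1) i c" and j: "j \<le> (d + 1) div 2"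
  shows "gvec d i h j = c j"
proof -
  define c' where "c' = (\<lambda>j. if j \<le> (d + 1) div 2 then c j else 0)"
  have "basis_sum (d + 1) i c' = basis_sum (d + 1) i c"
    unfolding basis_sum_def c'_def by (rule sum.cong) auto
  then have h': "h = basis_sum (d + 1) i c'" using h by simp
  have "gvec d i h = c'"
    unfolding gvec_def
  proof (rule the_equality)
    show "(\<forall>j>(d + 1) div 2. c' j = 0) \<and>
        h = (\<Sum>j\<le>(d + 1) div 2. smult (c' j) (monom 1 j * Pdi (int d - 2 * int j) i))"
      using h' unfolding basis_sum_expand by (simp add: c'_def)
    fix g
    assume g: "(\<forall>j>(d + 1) div 2. g j = 0) \<and>
        h = (\<Sum>j\<le>(d + 1) div 2. smult (g j) (monom 1 j * Pdi (int d - 2 * int j) i))"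
    then have "basis_sum (d + 1) i g = basis_sum (d + 1) i c'" using h' unfolding basis_sum_expand by simp
    then show "g = c'"
      using g basis_sum_unique[of "d + 1" i g c'] by (auto simp: c'_def)
  qed
  then show ?thesis using j by (simp add: c'_def)
qed

lemma basis_sum_shift:
  assumes "n \<ge> 2"
  shows "basis_sum n i (case_nat a c) = smult a (Pdi (int n - 1) i) + X * basis_sum (n - 2) i c"
proof -
  have nd: "n div 2 = Suc ((n - 2) div 2)" using assms by (simp add: div_if)
  have shift: "int n - 1 - 2 * int (Suc j) = int (n - 2) - 1 - 2 * int j" for j
    using assms by simp
  have "basis_sum n i (case_nat a c) = smult a (Pdi (int n - 1) i) +
      (\<Sum>j\<le>(n - 2) div 2. smult (c j) (monom 1 (Suc j) * Pdi (int n - 1 - 2 * int (Suc j)) i))"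
    unfolding basis_sum_def nd sum.atMost_Suc_shift by simp
  also have "(\<Sum>j\<le>(n - 2) div 2. smult (c j) (monom 1 (Suc j) * Pdi (int n - 1 - 2 * int (Suc j)) i))
      = X * basis_sum (n - 2) i c"
    unfolding basis_sum_def sum_distrib_left
    by (rule sum.cong, rule refl, simp only: shift) (simp add: monom_Suc)
  finally show ?thesis .
qed

lemma basis_sum_small:
  assumes "n < 2"
  shows "basis_sum n i c = smult (c 0) (Pdi (int n - 1) i)"
  using assms by (simp add: basis_sum_def)

text \<open>Every palindromic polynomial of degree n has coordinates in the basis: subtract the
  right multiple of P_{n-1,i} to kill the constant term, divide by t, and recurse.\<close>
lemma basis_sum_exists:
  assumes "i > 0" "palindromic n h"
  shows "\<exists>c. h = basis_sum n i c"
  using assms(2)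
proof (induction n arbitrary: h rule: less_induct)
  case (less n h)
  define a where "a = coeff h 0"
  define r where "r = h - smult a (Pdi (int n - 1) i)"
  have pal_r: "palindromic n r"
    unfolding r_def using less.prems palindromic_Pdi[OF assms(1)] by (rule palindromic_diff)
  have "coeff r 0 = 0" unfolding r_def a_def by (simp add: coeff0_Pdi)
  then obtain r' where r': "r = pCons 0 r'" by (cases r) auto
  have h: "h = smult a (Pdi (int n - 1) i) + X * r'"
    using r' unfolding r_def by simp
  show ?case
  proof (cases "n < 2")
    case True
    then have "r' = 0" using palindromic_pCons0(2) pal_r r' by blast
    then have "h = basis_sum n i (\<lambda>_. a)" using h True by (simp add: basis_sum_small)
    then show ?thesis by blast
  next
    case False
    then obtain c where "r' = basis_sum (n - 2) i c"
      using less.IH[of "n - 2" r'] palindromic_pCons0(1) pal_r r' by auto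
    then have "h = basis_sum n i (case_nat a c)" using h False by (simp add: basis_sum_shift)
    then show ?thesis by blast
  qed
qed

section \<open>The cone of nonnegative combinations\<close>

definition cone :: "nat \<Rightarrow> nat \<Rightarrow> rat poly \<Rightarrow> bool" where
  "cone m n p \<longleftrightarrow> (\<exists>c. (\<forall>j. c j \<ge> 0) \<and> p = basis_sum n m c)"

lemma coneI:
  assumes "p = basis_sum n m c" "\<And>j. c j \<ge> 0"
  shows "cone m n p"
  using assms unfolding cone_def by blast

lemma cone_zero: "cone m n 0"
  by (rule coneI[of _ _ _ "\<lambda>_. 0"]) (simp_all add: basis_sum_def)

lemma cone_add:
  assumes "cone m n p" "cone m n q"
  shows "cone m n (p + q)"
proof -
  obtain c c' where c: "\<forall>j. c j \<ge> 0" "p = basis_sum n m c"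
    and c': "\<forall>j. c' j \<ge> 0" "q = basis_sum n m c'"
    using assms unfolding cone_def by blast
  have "p + q = basis_sum n m (\<lambda>j. c j + c' j)"
    using c c' by (simp add: basis_sum_def sum.distrib smult_add_left)
  then show ?thesis by (rule coneI) (use c c' in \<open>simp add: add_nonneg_nonneg\<close>)
qed

lemma cone_smult:
  assumes "cone m n p" "a \<ge> 0"
  shows "cone m n (smult a p)"
proof -
  obtain c where c: "\<forall>j. c j \<ge> 0" "p = basis_sum n m c" using assms(1) unfolding cone_def by blast
  have smult_sum_right: "smult a (sum f S) = (\<Sum>j\<in>S. smult a (f j))" for f :: "nat \<Rightarrow> rat poly" and S
    by (induction S rule: infinite_finite_induct) (simp_all add: smult_add_right)
  have "smult a p = basis_sum n m (\<lambda>j. a * c j)"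
    using c by (simp add: basis_sum_def smult_sum_right)
  then show ?thesis by (rule coneI) (use c assms(2) in simp)
qed

lemma cone_sum:
  assumes "\<And>j. j \<in> S \<Longrightarrow> cone m n (f j)"
  shows "cone m n (sum f S)"
  using assms by (induction S rule: infinite_finite_induct) (simp_all add: cone_zero cone_add)

text \<open>Multiplying by t maps the cone in degree n into the cone in degree n + 2, since
  t B_{n-1,m} is the tail of B_{n+1,m}.\<close>
lemma cone_shift:
  assumes "cone m n p"
  shows "cone m (n + 2) (X * p)"
proof -
  obtain c where c: "\<forall>j. c j \<ge> 0" "p = basis_sum n m c" using assms unfolding cone_def by blast
  have "X * p = basis_sum (n + 2) m (case_nat 0 c)"
    using c basis_sum_shift[of "n + 2" m 0 c] by simp
  then show ?thesis by (rule coneI) (use c in \<open>simp split: nat.split\<close>)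
qed

lemma cone_shift_monom:
  assumes "cone m n p"
  shows "cone m (n + 2 * k) (monom 1 k * p)"
proof (induction k)
  case 0
  then show ?case using assms by simp
next
  case (Suc k)
  have "cone m (n + 2 * k + 2) (X * (monom 1 k * p))" by (rule cone_shift[OF Suc])
  then show ?case by (simp add: monom_Suc)
qed

lemma cone_Pdi_self: "cone m n (Pdi (int n - 1) m)"
proof -
  have "basis_sum n m (\<lambda>j. if j = 0 then 1 else 0)
      = (\<Sum>j\<le>n div 2. if j = 0 then Pdi (int n - 1) m else 0)"
    unfolding basis_sum_def by (rule sum.cong) simp_all
  also have "\<dots> = Pdi (int n - 1) m" by (simp add: sum.delta)
  finally have "Pdi (int n - 1) m = basis_sum n m (\<lambda>j. if j = 0 then 1 else 0)" ..
  then show ?thesis by (rule coneI) simp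
qed

lemma cone_geom:
  assumes "m > 0" "x \<le> m"
  shows "cone m (k * m + x) (geom_poly m ^ k * geom_poly x)"
  using cone_Pdi_self[of m "k * m + x"] unfolding Pdi_geom[OF assms] .

definition geom_stable :: "nat \<Rightarrow> nat \<Rightarrow> rat poly \<Rightarrow> bool" where
  "geom_stable m N F \<longleftrightarrow>
     (\<forall>k x. x \<le> m \<longrightarrow> cone m (N + k * m + x) (F * geom_poly m ^ k * geom_poly x))"

text \<open>Induction on x: if b = m the factor [b] is absorbed into [m]^(k+1); otherwise the
  exchange identity trades [x][b] for [x-1][b+1] plus t^x [b-x].\<close>
lemma geom_stable_pair:
  assumes stable: "geom_stable m N F" and "x \<le> b" "b \<le> m"
  shows "cone m (N + k * m + x + b) (F * geom_poly m ^ k * geom_poly x * geom_poly b)"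
  using assms(2,3)
proof (induction x arbitrary: b k)
  case 0
  then show ?case using stable unfolding geom_stable_def by (simp add: geom_poly_0)
next
  case (Suc a)
  show ?case
  proof (cases "b = m")
    case True
    have "cone m (N + Suc k * m + Suc a) (F * geom_poly m ^ Suc k * geom_poly (Suc a))"
      using stable[unfolded geom_stable_def, rule_format, of "Suc a" "Suc k"] Suc.prems True by simp
    moreover have "N + k * m + Suc a + b = N + Suc k * m + Suc a" using True by simp
    moreover have "F * geom_poly m ^ k * geom_poly (Suc a) * geom_poly b = F * geom_poly m ^ Suc k * geom_poly (Suc a)"
      using True by (simp only: power_Suc ac_simps)
    ultimately show ?thesis by (simp only:)
  next
    case False
    obtain c where "b = Suc a + c" using Suc.prems(1) le_Suc_ex by blast
    with False Suc.prems(2) have c: "b = Suc a + c" "Suc (Suc a) + c \<le> m" by simp_all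
    define G where "G = F * geom_poly m ^ k"
    have first: "cone m (N + k * m + a + (Suc (Suc a) + c)) (G * geom_poly a * geom_poly (Suc (Suc a) + c))"
      unfolding G_def by (rule Suc.IH) (use c(2) in simp_all)
    have "c \<le> m" using c(2) by simp
    then have "cone m (N + k * m + c) (G * geom_poly c)"
      using stable unfolding geom_stable_def G_def by blast
    then have second: "cone m (N + k * m + c + 2 * Suc a) (monom 1 (Suc a) * (G * geom_poly c))"
      by (rule cone_shift_monom)
    have "F * geom_poly m ^ k * geom_poly (Suc a) * geom_poly b
        = G * (geom_poly (Suc a) * geom_poly (Suc a + c))"
      by (simp only: G_def c(1) mult.assoc)
    also have "\<dots> = G * (geom_poly a * geom_poly (Suc (Suc a) + c) + X ^ Suc a * geom_poly c)"
      by (simp only: geom_poly_exchange)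
    also have "\<dots> = G * geom_poly a * geom_poly (Suc (Suc a) + c) + monom 1 (Suc a) * (G * geom_poly c)"
      by (simp only: monom_X distrib_left ac_simps)
    finally have split: "F * geom_poly m ^ k * geom_poly (Suc a) * geom_poly b = \<dots>" .
    have deg: "N + k * m + a + (Suc (Suc a) + c) = N + k * m + Suc a + b"
      "N + k * m + c + 2 * Suc a = N + k * m + Suc a + b"
      using c(1) by simp_all
    show ?thesis
      unfolding split by (rule cone_add[OF first[unfolded deg(1)] second[unfolded deg(2)]])
  qed
qed

lemma geom_stable_mult:
  assumes "geom_stable m N F" "b \<le> m"
  shows "geom_stable m (N + b) (F * geom_poly b)"
  unfolding geom_stable_def
proof (intro allI impI)
  fix k x
  assume "x \<le> m"
  then consider "x \<le> b" | "b \<le> x" "x \<le> m" by linarith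
  then show "cone m (N + b + k * m + x) (F * geom_poly b * geom_poly m ^ k * geom_poly x)"
  proof cases
    case 1
    then show ?thesis using geom_stable_pair[OF assms(1) 1 assms(2), of k] by (simp only: ac_simps)
  next
    case 2
    then show ?thesis using geom_stable_pair[OF assms(1) 2, of k] by (simp only: ac_simps)
  qed
qed

lemma geom_stable_power:
  assumes "m > 0" "b \<le> m"
  shows "geom_stable m (q * b) (geom_poly b ^ q)"
proof (induction q)
  case 0
  then show ?case using cone_geom[OF assms(1)] by (simp add: geom_stable_def)
next
  case (Suc q)
  have "geom_stable m (q * b + b) (geom_poly b ^ q * geom_poly b)"
    by (rule geom_stable_mult[OF Suc assms(2)])
  then show ?case by (simp only: mult_Suc add.commute power_Suc2)
qed

lemma cone_Pdi:
  assumes "i > 0"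
  shows "cone (Suc i) n (Pdi (int n - 1) i)"
proof -
  have "geom_stable (Suc i) (n div i * i) (geom_poly i ^ (n div i))"
    by (rule geom_stable_power) simp_all
  moreover have "n mod i \<le> Suc i" using mod_less_divisor[OF assms, of n] by linarith
  ultimately have "cone (Suc i) (n div i * i + 0 * Suc i + n mod i)
      (geom_poly i ^ (n div i) * geom_poly (Suc i) ^ 0 * geom_poly (n mod i))"
    unfolding geom_stable_def by blast
  then show ?thesis by (simp add: Pdi_geom_decomp[OF assms])
qed

lemma cone_basis_element:
  assumes "i > 0" "j \<le> (d + 1) div 2"
  shows "cone (Suc i) (d + 1) (monom 1 j * Pdi (int d - 2 * int j) i)"
proof -
  have "cone (Suc i) (d + 1 - 2 * j + 2 * j) (monom 1 j * Pdi (int (d + 1 - 2 * j) - 1) i)"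
    by (rule cone_shift_monom[OF cone_Pdi[OF assms(1)]])
  moreover have "int (d + 1 - 2 * j) - 1 = int d - 2 * int j" "d + 1 - 2 * j + 2 * j = d + 1"
    using assms(2) by linarith+
  ultimately show ?thesis by simp
qed

theorem proposition1p2:
  fixes d i :: nat and h :: "rat poly"
  assumes "i > 0"
    and "degree h \<le> d + 1"
    and "\<forall>t::rat. t \<noteq> 0 \<longrightarrow> poly h t = t ^ (d + 1) * poly h (1 / t)"
    and "\<forall>j \<le> (d + 1) div 2. gvec d i h j \<ge> 0"
  shows "\<forall>j \<le> (d + 1) div 2. gvec d (i + 1) h j \<ge> 0"
proof -
  have "palindromic (d + 1) h" unfolding palindromic_def using assms(2,3) by blast
  then obtain c where c: "h = basis_sum (d + 1) i c" using basis_sum_exists[OF assms(1)] by blast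
  have nonneg: "c j \<ge> 0" if "j \<le> (d + 1) div 2" for j
  proof -
    have "gvec d i h j \<ge> 0" using assms(4) that by blast
    then show ?thesis using gvec_basis_sum[OF c that] by simp
  qed
  have "cone (Suc i) (d + 1) h"
    unfolding c basis_sum_expand
  proof (rule cone_sum)
    fix j
    assume "j \<in> {..(d + 1) div 2}"
    then have "j \<le> (d + 1) div 2" by simp
    then show "cone (Suc i) (d + 1) (smult (c j) (monom 1 j * Pdi (int d - 2 * int j) i))"
      by (intro cone_smult cone_basis_element assms(1) nonneg)
  qed
  then obtain c' where "\<forall>j. c' j \<ge> 0" "h = basis_sum (d + 1) (Suc i) c'"
    unfolding cone_def by blast
  then show ?thesis using gvec_basis_sum[of h d "Suc i" c'] by simp
qed

end
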